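(* In the setting below, for any $F_1,\dots,F_n\in K_w[\mathcal G\oplus\mathcal H]$, $\mathop{\mathrm{Res}}_{\mathbf x}J(F_1,\dots,F_n)=0$.
   Context: $K$ a field; $\mathcal G\oplus\mathcal H$ a totally ordered abelian group with $\mathcal H\cong\mathbb Z^n$ with basis $e_1,\dots,e_n$, $x_i=t^{e_i}$; $K_w[\mathcal A]$ denotes Malcev–Neumann series (formal series with well-ordered support) over a TOA-group $\mathcal A$; elements of $K_w[\mathcal G\oplus\mathcal H]$ are written $\sum_{\mathbf k\in\mathbb Z^n}b_{\mathbf k}\mathbf x^{\mathbf k}$ with $b_{\mathbf k}\in K_w[\mathcal G]$. Partial derivatives act termwise, $\mathop{\mathrm{Res}}_{\mathbf x}\sum b_{\mathbf k}\mathbf x^{\mathbf k}=b_{(-1,\dots,-1)}$, and $J(F_1,\dots,F_n)=\det(\partial F_i/\partial x_j)_{i,j}$. *)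

theory Defs
  imports "HOL-Library.Product_Plus" "HOL-Library.Function_Algebras"
    "HOL-Combinatorics.Permutations"
begin

text \<open>The group G (+) H is represented as pairs (g, k) with g in G (a type 'g)
  and k :: 'n => int a vector in Z^n (coordinates w.r.t. the basis e_1..e_n,
  indexed by a finite type 'n).\<close>

definition toa_order :: "('a::ab_group_add \<Rightarrow> 'a \<Rightarrow> bool) \<Rightarrow> bool" where
  "toa_order le \<longleftrightarrow>
     (\<forall>x. le x x) \<and> (\<forall>x y. le x y \<and> le y x \<longrightarrow> x = y) \<and>
     (\<forall>x y z. le x y \<and> le y z \<longrightarrow> le x z) \<and> (\<forall>x y. le x y \<or> le y x) \<and>
     (\<forall>x y z. le x y \<longrightarrow> le (x + z) (y + z))"

definition well_ordered_set :: "('a \<Rightarrow> 'a \<Rightarrow> bool) \<Rightarrow> 'a set \<Rightarrow> bool" where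
  "well_ordered_set le S \<longleftrightarrow> (\<forall>T \<subseteq> S. T \<noteq> {} \<longrightarrow> (\<exists>m\<in>T. \<forall>t\<in>T. le m t))"

definition mn_series :: "('a \<Rightarrow> 'a \<Rightarrow> bool) \<Rightarrow> ('a \<Rightarrow> 'k::zero) \<Rightarrow> bool" where
  "mn_series le f \<longleftrightarrow> well_ordered_set le {a. f a \<noteq> 0}"

definition mn_prod :: "('i::finite \<Rightarrow> 'a::ab_group_add \<Rightarrow> 'k::field) \<Rightarrow> 'a \<Rightarrow> 'k" where
  "mn_prod hs a = (\<Sum>t \<in> {t. (\<Sum>i\<in>UNIV. t i) = a \<and> (\<forall>i. hs i (t i) \<noteq> 0)}.
                      \<Prod>i\<in>UNIV. hs i (t i))"

text \<open>Termwise partial derivative d/dx_j: b x^(k+e_j) contributes (k_j+1) b x^k.\<close>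
definition pdx :: "'n \<Rightarrow> ('g \<times> ('n \<Rightarrow> int) \<Rightarrow> 'k::field) \<Rightarrow> ('g \<times> ('n \<Rightarrow> int) \<Rightarrow> 'k)" where
  "pdx j f = (\<lambda>(g, k). of_int (k j + 1) * f (g, k(j := k j + 1)))"

definition jac :: "('n::finite \<Rightarrow> ('g::ab_group_add \<times> ('n \<Rightarrow> int) \<Rightarrow> 'k::field))
                   \<Rightarrow> ('g \<times> ('n \<Rightarrow> int) \<Rightarrow> 'k)" where
  "jac F = (\<lambda>a. \<Sum>p \<in> {p. p permutes (UNIV :: 'n set)}.
                  of_int (sign p) * mn_prod (\<lambda>i. pdx (p i) (F i)) a)"

definition res_x :: "('g \<times> ('n \<Rightarrow> int) \<Rightarrow> 'k) \<Rightarrow> ('g \<Rightarrow> 'k)" where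
  "res_x f = (\<lambda>g. f (g, \<lambda>_. -1))"

end

theory Submission
  imports Defs "HOL-Analysis.Analysis"
begin

(*
  By the Leibniz formula, Res J is the signed sum over permutations p of the coefficient
  of x^(-1,...,-1) in the product of the partials dF_i/dx_(p i).  Differentiating in x_j
  multiplies the coefficient at an exponent (h, k) by k_j and shifts it by -e_j; as the
  shifts e_(p i) add up to (1,...,1) for every p, that coefficient is the sum, over tuples
  (h_i, k_i) of support points of the F_i adding up to (g, 0), of the products of
  k_i (p i) * F_i (h_i, k_i).  Summing over p produces, for each tuple, the determinant of
  the integer matrix with rows k_i, and these rows add up to 0.
  All sums involved are finite because the supports are well ordered: passing to
  subsequences coordinate by coordinate, infinitely many such tuples would contain two,
  t <= t' coordinatewise, with equal sums, forcing t = t'.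
*)

lemma toa_orderD:
  assumes "toa_order le"
  shows "le x x" and "le x y \<Longrightarrow> le y x \<Longrightarrow> x = y" and "le x y \<Longrightarrow> le y z \<Longrightarrow> le x z"
    and "le x y \<Longrightarrow> le (x + z) (y + z)"
  using assms unfolding toa_order_def by blast+

lemma toa_sum_mono:
  assumes "toa_order le" and "\<forall>i\<in>I. le (x i) (y i)"
  shows "le (sum x I) (sum y I)"
  using assms(2)
proof (induction I rule: infinite_finite_induct)
  case (infinite I)
  then show ?case
    using toa_orderD(1)[OF assms(1)] by simp
next
  case empty
  then show ?case
    using toa_orderD(1)[OF assms(1)] by simp
next
  case (insert j I)
  then have "le (x j + sum x I) (y j + sum x I)"
    using toa_orderD(4)[OF assms(1)] by simp
  moreover have "le (y j + sum x I) (y j + sum y I)"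
    using toa_orderD(4)[OF assms(1), of "sum x I" "sum y I" "y j"] insert by (simp add: add.commute)
  ultimately have "le (x j + sum x I) (y j + sum y I)"
    by (rule toa_orderD(3)[OF assms(1)])
  with insert(1,2) show ?case
    by simp
qed

lemma toa_sum_eq_imp_eq:
  fixes x y :: "'i::finite \<Rightarrow> 'a::ab_group_add"
  assumes le: "toa_order le" and "\<forall>i. le (x i) (y i)" and "sum x UNIV = sum y UNIV"
  shows "x = y"
proof (rule ext)
  fix j :: 'i
  let ?R = "UNIV - {j}"
  have sum_split: "sum z UNIV = z j + sum z ?R" for z :: "'i \<Rightarrow> 'a"
    by (simp add: sum.remove)
  have "le (sum x ?R) (sum y ?R)"
    using assms(2) by (intro toa_sum_mono[OF le]) simp
  then have "le (sum x ?R + x j) (sum y ?R + x j)"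
    by (rule toa_orderD(4)[OF le])
  moreover have "sum x ?R + x j = y j + sum y ?R"
    using assms(3) unfolding sum_split by (simp add: add_ac)
  ultimately have "le (y j + sum y ?R) (x j + sum y ?R)"
    by (simp add: add_ac)
  moreover have "le (x j + sum y ?R) (y j + sum y ?R)"
    using assms(2) by (intro toa_orderD(4)[OF le]) simp
  ultimately have "y j + sum y ?R = x j + sum y ?R"
    by (rule toa_orderD(2)[OF le])
  then show "x j = y j"
    by simp
qed

lemma well_ordered_set_monotone_subseq:
  assumes "reflp le" and "transp le" and wo: "well_ordered_set le A" and "\<And>n. s n \<in> A"
  obtains f :: "nat \<Rightarrow> nat" where "strict_mono f" and "monotone (\<le>) le (s \<circ> f)"
proof -
  have "\<exists>m>n. \<forall>m'>n. le (s m) (s m')" for n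
  proof -
    have "s ` {n<..} \<subseteq> A" and "s ` {n<..} \<noteq> {}"
      using assms(4) by auto
    then obtain x where "x \<in> s ` {n<..}" and "\<forall>y \<in> s ` {n<..}. le x y"
      using wo unfolding well_ordered_set_def by blast
    then show ?thesis by auto
  qed
  then obtain g where g: "\<And>n. g n > n" "\<And>n m. m > n \<Longrightarrow> le (s (g n)) (s m)"
    by metis
  define f where "f k = (g ^^ Suc k) 0" for k
  have f_Suc: "f (Suc k) = g (f k)" for k
    by (simp add: f_def)
  have le_Suc: "le (s (f k)) (s (f (Suc k)))" for k
  proof -
    have "f k = g ((g ^^ k) 0)"
      by (simp add: f_def)
    moreover have "(g ^^ k) 0 < f (Suc k)"
      using g(1)[of "(g ^^ k) 0"] g(1)[of "f k"] f_Suc calculation by simp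
    ultimately show ?thesis
      using g(2) by simp
  qed
  have "le (s (f m)) (s (f m'))" if "m \<le> m'" for m m'
    using that
  proof (induction m' rule: dec_induct)
    case base then show ?case using assms(1) by (simp add: reflpD)
  next
    case (step n)
    then show ?case using assms(2) le_Suc[of n] by (blast dest: transpD)
  qed
  then have "monotone (\<le>) le (s \<circ> f)"
    by (simp add: monotone_def)
  moreover have "strict_mono f"
    unfolding strict_mono_Suc_iff f_Suc using g(1) by simp
  ultimately show thesis using that by blast
qed

lemma well_ordered_sets_monotone_subseq:
  assumes "reflp le" and "transp le" and "\<And>i. well_ordered_set le (A i)"
    and "\<And>n i. u n i \<in> A i" and "finite I"
  obtains f :: "nat \<Rightarrow> nat" where "strict_mono f" and "\<forall>i\<in>I. monotone (\<le>) le (\<lambda>m. u (f m) i)"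
proof -
  have "\<exists>f::nat \<Rightarrow> nat. strict_mono f \<and> (\<forall>i\<in>I. monotone (\<le>) le (\<lambda>m. u (f m) i))"
    using \<open>finite I\<close>
  proof (induction I rule: finite_induct)
    case empty
    have "strict_mono (id :: nat \<Rightarrow> nat)"
      by (simp add: strict_mono_def)
    then show ?case
      by blast
  next
    case (insert j I)
    from insert.IH obtain f :: "nat \<Rightarrow> nat" where f: "strict_mono f" "\<forall>i\<in>I. monotone (\<le>) le (\<lambda>m. u (f m) i)"
      by blast
    obtain h :: "nat \<Rightarrow> nat" where h: "strict_mono h" "monotone (\<le>) le ((\<lambda>m. u (f m) j) \<circ> h)"
      using assms(4) by (rule well_ordered_set_monotone_subseq[OF assms(1,2) assms(3)[of j],
          where s = "\<lambda>m. u (f m) j"])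
    have "monotone (\<le>) le ((\<lambda>m. u (f m) i) \<circ> h)" if "i \<in> I" for i
      using f(2) that strict_mono_mono[OF h(1)] by (auto intro: monotone_on_o)
    then have "\<forall>i\<in>insert j I. monotone (\<le>) le (\<lambda>m. u ((f \<circ> h) m) i)"
      using h(2) by (simp add: comp_def)
    moreover have "strict_mono (f \<circ> h)"
      using f(1) h(1) by (simp add: strict_mono_def)
    ultimately show ?case by blast
  qed
  then show thesis using that by blast
qed

lemma sum_fun_apply: "(\<Sum>i\<in>A. f i) x = (\<Sum>i\<in>A. f i x)"
  by (induction A rule: infinite_finite_induct) auto

definition supp_tuples :: "('i \<Rightarrow> 'a \<Rightarrow> 'k::zero) \<Rightarrow> 'a::comm_monoid_add \<Rightarrow> ('i \<Rightarrow> 'a) set" where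
  "supp_tuples hs a = {t. (\<Sum>i\<in>UNIV. t i) = a \<and> (\<forall>i. hs i (t i) \<noteq> 0)}"

lemma mn_prod_eq_sum_supp_tuples:
  "mn_prod hs a = (\<Sum>t\<in>supp_tuples hs a. \<Prod>i\<in>UNIV. hs i (t i))"
  by (simp add: mn_prod_def supp_tuples_def)

lemma mn_prod_shift:
  fixes hs :: "'i::finite \<Rightarrow> 'a::ab_group_add \<Rightarrow> 'k::field"
  shows "mn_prod (\<lambda>i x. hs i (x + d i)) a = mn_prod hs (a + (\<Sum>i\<in>UNIV. d i))"
  unfolding mn_prod_eq_sum_supp_tuples
proof (rule sum.reindex_bij_witness[where j = "\<lambda>t i. t i + d i" and i = "\<lambda>s i. s i - d i"])
  fix t assume "t \<in> supp_tuples (\<lambda>i x. hs i (x + d i)) a"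
  then show "(\<lambda>i. t i + d i) \<in> supp_tuples hs (a + (\<Sum>i\<in>UNIV. d i))"
    by (simp add: supp_tuples_def sum.distrib)
next
  fix s assume "s \<in> supp_tuples hs (a + (\<Sum>i\<in>UNIV. d i))"
  then show "(\<lambda>i. s i - d i) \<in> supp_tuples (\<lambda>i x. hs i (x + d i)) a"
    by (simp add: supp_tuples_def sum_subtractf)
qed simp_all

lemma mn_prod_eq_sum_supp_tuples_superset:
  assumes "finite (supp_tuples G a)" and "\<And>i x. hs i x \<noteq> 0 \<Longrightarrow> G i x \<noteq> 0"
  shows "mn_prod hs a = (\<Sum>t\<in>supp_tuples G a. \<Prod>i\<in>UNIV. hs i (t i))"
  unfolding mn_prod_eq_sum_supp_tuples
  by (rule sum.mono_neutral_left) (use assms in \<open>auto simp: supp_tuples_def\<close>)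

lemma finite_supp_tuples:
  fixes hs :: "'i::finite \<Rightarrow> 'a::ab_group_add \<Rightarrow> 'k::zero"
  assumes le: "toa_order le" and "\<And>i. mn_series le (hs i)"
  shows "finite (supp_tuples hs a)"
proof (rule ccontr)
  assume "infinite (supp_tuples hs a)"
  then obtain u :: "nat \<Rightarrow> 'i \<Rightarrow> 'a" where "inj u" and "range u \<subseteq> supp_tuples hs a"
    using infinite_countable_subset by blast
  then have u: "u n i \<in> {x. hs i x \<noteq> 0}" "sum (u n) UNIV = a" for n i
    by (auto simp: supp_tuples_def)
  have "reflp le" and "transp le"
    using toa_orderD[OF le] by (blast intro: reflpI transpI)+
  moreover have "well_ordered_set le {x. hs i x \<noteq> 0}" for i
    using assms(2) by (simp add: mn_series_def)
  ultimately obtain f :: "nat \<Rightarrow> nat"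
    where "strict_mono f" and mono: "\<forall>i\<in>UNIV. monotone (\<le>) le (\<lambda>m. u (f m) i)"
    using u(1) by (rule well_ordered_sets_monotone_subseq[where u = u and I = UNIV]) simp
  have "u (f 0) = u (f 1)"
  proof (rule toa_sum_eq_imp_eq[OF le])
    show "\<forall>i. le (u (f 0) i) (u (f 1) i)"
      using mono by (simp add: monotone_def)
    show "sum (u (f 0)) UNIV = sum (u (f 1)) UNIV"
      using u(2) by simp
  qed
  with \<open>inj u\<close> \<open>strict_mono f\<close> show False
    by (metis injD strict_mono_eq zero_neq_one)
qed

definition unit_exponent :: "'n \<Rightarrow> 'g::zero \<times> ('n \<Rightarrow> int)" where
  "unit_exponent j = (0, \<lambda>i. if i = j then 1 else 0)"

lemma pdx_eq_shift:
  fixes j :: 'n and f :: "'g::monoid_add \<times> ('n \<Rightarrow> int) \<Rightarrow> 'k::field"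
  shows "pdx j f = (\<lambda>x. of_int (snd (x + unit_exponent j) j) * f (x + unit_exponent j))"
proof
  fix x :: "'g \<times> ('n \<Rightarrow> int)"
  obtain g k where x: "x = (g, k)"
    by fastforce
  have "x + unit_exponent j = (g, k(j := k j + 1))"
    by (auto simp: x unit_exponent_def fun_eq_iff)
  then show "pdx j f x = of_int (snd (x + unit_exponent j) j) * f (x + unit_exponent j)"
    by (simp add: x pdx_def)
qed

lemma sum_unit_exponent_permutes:
  assumes "p permutes (UNIV :: 'n::finite set)"
  shows "(\<Sum>i\<in>UNIV. unit_exponent (p i)) = ((0::'g::comm_monoid_add), (\<lambda>_. 1))"
proof -
  have "(\<Sum>i\<in>UNIV. unit_exponent (p i)) = (\<Sum>j\<in>UNIV. unit_exponent j :: 'g \<times> ('n \<Rightarrow> int))"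
    using sum.permute[OF assms, of "unit_exponent :: 'n \<Rightarrow> 'g \<times> ('n \<Rightarrow> int)"]
    by (simp add: comp_def)
  also have "\<dots> = (0, \<lambda>_. 1)"
    by (simp add: prod_eq_iff fst_sum snd_sum fun_eq_iff unit_exponent_def sum_fun_apply)
  finally show ?thesis .
qed

lemma det_eq_0_if_rows_sum_0:
  fixes A :: "'a::field^'n^'n"
  assumes "(\<Sum>i\<in>UNIV. A $ i) = 0"
  shows "det A = 0"
proof -
  have "transpose A *v (\<chi> _. 1) = 0"
    using assms by (simp add: vec_eq_iff matrix_vector_mult_def transpose_def sum_component)
  moreover have "(\<chi> _. 1) \<noteq> (0 :: 'a^'n)"
    by (simp add: vec_eq_iff)
  ultimately have "\<not> invertible (transpose A)"
    by (metis invertible_left_inverse matrix_left_invertible_ker)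
  then show ?thesis
    by (simp add: invertible_det_nz)
qed

lemma res_jac_eq_sum_det:
  fixes F :: "'n::finite \<Rightarrow> ('g::ab_group_add \<times> ('n \<Rightarrow> int) \<Rightarrow> 'k::field)"
  assumes fin: "finite (supp_tuples F (g, 0))"
  shows "res_x (jac F) g = (\<Sum>s\<in>supp_tuples F (g, 0).
           (\<Prod>i\<in>UNIV. F i (s i)) * det (\<chi> i j. of_int (snd (s i) j) :: 'k^'n^'n))"
proof -
  let ?P = "{p. p permutes (UNIV :: 'n set)}" and ?S = "supp_tuples F (g, 0)"
  have coeff: "mn_prod (\<lambda>i. pdx (p i) (F i)) (g, \<lambda>_. -1) =
      (\<Sum>s\<in>?S. \<Prod>i\<in>UNIV. of_int (snd (s i) (p i)) * F i (s i))" if "p \<in> ?P" for p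
  proof -
    have "(\<Sum>i\<in>UNIV. unit_exponent (p i)) = ((0::'g), (\<lambda>_. 1 :: int))"
      using sum_unit_exponent_permutes that by simp
    then have "(g, \<lambda>_. -1) + (\<Sum>i\<in>UNIV. unit_exponent (p i)) = (g, 0 :: 'n \<Rightarrow> int)"
      by (simp add: fun_eq_iff)
    then have "mn_prod (\<lambda>i. pdx (p i) (F i)) (g, \<lambda>_. -1) =
        mn_prod (\<lambda>i x. of_int (snd x (p i)) * F i x) (g, 0)"
      using mn_prod_shift[where hs = "\<lambda>i x. of_int (snd x (p i)) * F i x"
          and d = "\<lambda>i. unit_exponent (p i)"] by (simp add: pdx_eq_shift)
    also have "\<dots> = (\<Sum>s\<in>?S. \<Prod>i\<in>UNIV. of_int (snd (s i) (p i)) * F i (s i))"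
      by (rule mn_prod_eq_sum_supp_tuples_superset[OF fin]) simp
    finally show ?thesis .
  qed
  have "res_x (jac F) g =
      (\<Sum>p\<in>?P. of_int (sign p) * (\<Sum>s\<in>?S. \<Prod>i\<in>UNIV. of_int (snd (s i) (p i)) * F i (s i)))"
    by (simp add: res_x_def jac_def coeff)
  also have "\<dots> = (\<Sum>s\<in>?S. (\<Prod>i\<in>UNIV. F i (s i)) *
      (\<Sum>p\<in>?P. of_int (sign p) * (\<Prod>i\<in>UNIV. of_int (snd (s i) (p i)))))"
    by (simp add: sum_distrib_left prod.distrib sum.swap[of _ ?P] mult_ac)
  finally show ?thesis
    by (simp add: det_def)
qed

theorem mainTheorem8:
  fixes le :: "'g::ab_group_add \<times> ('n::finite \<Rightarrow> int) \<Rightarrow> 'g \<times> ('n \<Rightarrow> int) \<Rightarrow> bool"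
    and F :: "'n \<Rightarrow> ('g \<times> ('n \<Rightarrow> int) \<Rightarrow> 'k::field)"
  assumes "toa_order le"
    and "\<forall>i. mn_series le (F i)"
  shows "res_x (jac F) = (\<lambda>_. 0)"
proof
  fix g :: 'g
  have fin: "finite (supp_tuples F (g, 0))"
    using finite_supp_tuples assms by blast
  have "det (\<chi> i j. of_int (snd (s i) j) :: 'k^'n^'n) = 0" if "s \<in> supp_tuples F (g, 0)" for s
  proof (rule det_eq_0_if_rows_sum_0)
    have "(\<Sum>i\<in>UNIV. snd (s i)) = 0"
      using that by (simp add: supp_tuples_def snd_sum[symmetric])
    then show "(\<Sum>i\<in>UNIV. (\<chi> i j. of_int (snd (s i) j) :: 'k^'n^'n) $ i) = 0"
      by (simp add: vec_eq_iff sum_component fun_eq_iff sum_fun_apply flip: of_int_sum)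
  qed
  then show "res_x (jac F) g = 0"
    by (simp add: res_jac_eq_sum_det[OF fin])
qed

end
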